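(* Let $G$ be a finite solvable group and let $\psi\neq 1_G$ be a non-trivial ordinary $S$-character of $G$. Then there exists an element $g\in G$ of prime power order $p^k$ ($p$ prime, $k\ge1$) with $\psi(g)=0$.
   Context: An $S$-character of a finite group $G$ is a virtual character $\psi$ (integral linear combination of irreducible complex characters) such that the trivial character $1_G$ occurs in $\psi$ with multiplicity exactly one and $\psi(g)$ is a non-negative real number for all $g\in G$. It is called ordinary if it is an actual character, i.e. all multiplicities of irreducible constituents are non-negative. *)

theory Defs
  imports "HOL-Algebra.Solvable_Groups" "HOL-Algebra.Multiplicative_Group" "Jordan_Normal_Form.Matrix"
begin

definition is_rep :: "('a, 'b) monoid_scheme \<Rightarrow> nat \<Rightarrow> ('a \<Rightarrow> complex mat) \<Rightarrow> bool" where
  "is_rep G n \<rho> \<longleftrightarrow>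
     (\<forall>g\<in>carrier G. \<rho> g \<in> carrier_mat n n) \<and>
     \<rho> \<one>\<^bsub>G\<^esub> = 1\<^sub>m n \<and>
     (\<forall>g\<in>carrier G. \<forall>h\<in>carrier G. \<rho> (g \<otimes>\<^bsub>G\<^esub> h) = \<rho> g * \<rho> h)"

definition mat_trace :: "complex mat \<Rightarrow> complex" where
  "mat_trace A = (\<Sum>i<dim_row A. A $$ (i, i))"

definition is_character :: "('a, 'b) monoid_scheme \<Rightarrow> ('a \<Rightarrow> complex) \<Rightarrow> bool" where
  "is_character G \<chi> \<longleftrightarrow>
     (\<exists>n \<rho>. is_rep G n \<rho> \<and> (\<forall>g\<in>carrier G. \<chi> g = mat_trace (\<rho> g)))"

text \<open>The standard inner product of class functions; the multiplicity of an
  irreducible character chi in psi is char_inner G psi chi.\<close>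
definition char_inner :: "('a, 'b) monoid_scheme \<Rightarrow> ('a \<Rightarrow> complex) \<Rightarrow> ('a \<Rightarrow> complex) \<Rightarrow> complex" where
  "char_inner G \<alpha> \<beta> = (\<Sum>g\<in>carrier G. \<alpha> g * cnj (\<beta> g)) / of_nat (order G)"

definition ordinary_S_character :: "('a, 'b) monoid_scheme \<Rightarrow> ('a \<Rightarrow> complex) \<Rightarrow> bool" where
  "ordinary_S_character G \<psi> \<longleftrightarrow>
     is_character G \<psi> \<and>
     char_inner G \<psi> (\<lambda>_. 1) = 1 \<and>
     (\<forall>g\<in>carrier G. \<psi> g \<in> \<real> \<and> 0 \<le> Re (\<psi> g))"

end

theory Submission
  imports Defs "Jordan_Normal_Form.Schur_Decomposition" "HOL-Number_Theory.Cong"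
begin

text \<open>
  Suppose \<open>\<psi> = tr \<rho>\<close> vanishes on no element of prime power order, and put
  \<open>E(S) = (\<Sum>x\<in>S. \<psi> x) - |S|\<close> (\<open>excess S\<close>) for subgroups \<open>S\<close>. The condition
  \<open>\<langle>\<psi>, 1\<rangle> = 1\<close> says \<open>E(G) = 0\<close>, while \<open>E(1) = \<psi>(1) - 1\<close>.

  Let \<open>N \<subseteq> H\<close> be subgroups with \<open>H\<close> normalizing \<open>N\<close> and \<open>h\<^sup>p \<in> N\<close> for all \<open>h \<in> H\<close>,
  \<open>p\<close> prime. With the idempotent \<open>e = |N|\<^sup>-\<^sup>1 \<Sum>n\<in>N. \<rho> n\<close> (\<open>average N\<close>), the mean
  \<open>f(x)\<close> (\<open>coset_mean N x\<close>) of \<open>\<psi>\<close> over the coset \<open>xN\<close> is \<open>tr (\<rho>(x) e)\<close>, and for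
  \<open>m \<in> H - N\<close> the matrix \<open>X = \<rho>(m) e\<close> satisfies \<open>X\<^sup>p\<^sup>+\<^sup>1 = X\<close>. Hence
  \<open>\<Prod>0<j<p. f(m\<^sup>j) = \<Prod>0<j<p. tr(X\<^sup>j)\<close> is the norm, from the \<open>p\<close>-th cyclotomic field,
  of an algebraic integer, hence an integer; it is positive because every coset \<open>mN\<close>
  contains an element of prime power order. By AM-GM \<open>\<Sum>0<j<p. f(m\<^sup>j) \<ge> p - 1\<close>, and
  averaging over \<open>m \<in> H - N\<close> gives \<open>E(N) \<le> E(H)\<close>.

  A finite solvable group descends from \<open>G\<close> to \<open>1\<close> through such sections, so \<open>\<psi>(1) \<le> 1\<close>;
  but a linear character with non-negative real values is trivial.
\<close>

lemma inj_on_endo_imp_bij_betw: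
  assumes "finite A" "inj_on f A" "f ` A \<subseteq> A"
  shows "bij_betw f A A"
  using endo_inj_surj[OF assms(1,3,2)] assms(2) by (simp add: bij_betw_def)

lemma sum_bij_endo:
  assumes "finite A" "inj_on f A" "f ` A \<subseteq> A"
  shows "(\<Sum>x\<in>A. g (f x)) = (\<Sum>x\<in>A. g x)"
  using sum.reindex_bij_betw[OF inj_on_endo_imp_bij_betw[OF assms]] .

lemma card_le_sum_if_one_le_prod:
  fixes a :: "'b \<Rightarrow> real"
  assumes "finite A" "\<And>x. x \<in> A \<Longrightarrow> 0 < a x" "1 \<le> (\<Prod>x\<in>A. a x)"
  shows "real (card A) \<le> (\<Sum>x\<in>A. a x)"
proof -
  have "0 \<le> ln (\<Prod>x\<in>A. a x)" using assms(3) by simp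
  also have "\<dots> = (\<Sum>x\<in>A. ln (a x))" using assms(1,2) by (intro ln_prod) (auto dest: less_imp_neq[symmetric])
  also have "\<dots> \<le> (\<Sum>x\<in>A. a x - 1)" using assms(2) by (intro sum_mono ln_le_minus_one) auto
  finally show ?thesis by (simp add: sum_subtractf)
qed

section \<open>Power sums of roots of unity\<close>

lemma root_of_unity_power_sum_eq_0:
  fixes z :: complex
  assumes "z ^ p = 1" "z \<noteq> 1"
  shows "(\<Sum>t=1..p. z ^ t) = 0"
proof -
  have "(\<Sum>t=1..p. z ^ t) = z * (\<Sum>t<p. z ^ t)"
    by (simp add: sum.atLeast1_atMost_eq sum_distrib_left)
  also have "(\<Sum>t<p. z ^ t) = 0" using assms by (simp add: sum_gp_strict)
  finally show ?thesis by simp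
qed

lemma power_eq_power_mod:
  fixes e :: "'a::idom"
  assumes "e ^ (p + 1) = e" "\<not> p dvd k"
  shows "e ^ k = e ^ (k mod p)"
proof (cases "e = 0")
  case True
  have "k \<noteq> 0" using assms(2) by (metis dvd_0_right)
  moreover have "k mod p \<noteq> 0" using assms(2) by (simp add: mod_eq_0_iff_dvd)
  ultimately
  show ?thesis using True by (simp add: power_0_left)
next
  case False
  with assms(1) have "e ^ p = 1" by (simp add: power_Suc2 del: power_Suc)
  have "e ^ k = e ^ (p * (k div p) + k mod p)" by (simp only: mult_div_mod_eq)
  also have "\<dots> = e ^ (k mod p)" using \<open>e ^ p = 1\<close> by (simp only: power_add power_mult power_one mult_1)
  finally show ?thesis .
qed

lemma twisted_power_sums_count:
  fixes L :: "complex list" and c :: complex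
  assumes L: "\<forall>\<mu>\<in>set L. \<mu> ^ (p + 1) = \<mu>" and c: "c ^ p = 1"
  shows "(\<Sum>t=1..p. c ^ t * (\<Sum>\<mu>\<leftarrow>L. \<mu> ^ t)) = of_nat p * of_nat (length (filter (\<lambda>\<mu>. c * \<mu> = 1) L))"
proof -
  have inner: "(\<Sum>t=1..p. (c * \<mu>) ^ t) = (if c * \<mu> = 1 then of_nat p else 0)"
    if \<mu>: "\<mu> ^ (p + 1) = \<mu>" for \<mu>
  proof (cases "\<mu> = 0")
    case False
    with \<mu> have "\<mu> ^ p = 1" by (simp add: power_Suc2 del: power_Suc)
    with c have "(c * \<mu>) ^ p = 1" by (simp add: power_mult_distrib)
    then show ?thesis using root_of_unity_power_sum_eq_0 by simp
  qed (auto simp: power_0_left intro!: sum.neutral)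
  have "(\<Sum>t=1..p. c ^ t * (\<Sum>\<mu>\<leftarrow>L. \<mu> ^ t)) = (\<Sum>\<mu>\<leftarrow>L. \<Sum>t=1..p. (c * \<mu>) ^ t)"
    by (induction L) (simp_all add: distrib_left sum.distrib power_mult_distrib)
  also have "\<dots> = (\<Sum>\<mu>\<leftarrow>L. if c * \<mu> = 1 then of_nat p else 0)"
    using L inner by (intro arg_cong[of _ _ sum_list] map_cong) auto
  also have "\<dots> = of_nat p * of_nat (length (filter (\<lambda>\<mu>. c * \<mu> = 1) L))"
    by (induction L) (simp_all add: distrib_left)
  finally show ?thesis .
qed

lemma power_sum_in_Ints:
  fixes L :: "complex list"
  assumes p: "p \<ge> 2" and L: "\<forall>\<mu>\<in>set L. \<mu> ^ (p + 1) = \<mu>"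
    and equal_sums: "\<forall>t\<in>{1..<p}. (\<Sum>\<mu>\<leftarrow>L. \<mu> ^ t) = (\<Sum>\<mu>\<leftarrow>L. \<mu>)"
  shows "(\<Sum>\<mu>\<leftarrow>L. \<mu>) \<in> \<int>"
proof -
  define S where "S t = (\<Sum>\<mu>\<leftarrow>L. \<mu> ^ t)" for t
  define c where "c = cis (2 * pi / p)"
  have c_root: "c ^ p = 1" unfolding c_def using p by (simp add: DeMoivre)
  have c_ne_1: "c \<noteq> 1"
  proof
    assume "c = 1"
    then have "cos (2 * pi / p) = 1" unfolding c_def by (metis cis.sel(1) one_complex.sel(1))
    then obtain n :: int where "2 * pi / p = of_int n * 2 * pi" using cos_one_2pi_int by blast
    then have "real_of_int n = 1 / real p" using p by (simp add: field_simps)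
    moreover have "0 < 1 / real p" "1 / real p < 1" using p by auto
    ultimately have "0 < n" "n < 1" by linarith+
    then show False by linarith
  qed
  have S_p: "S p = of_nat (length (filter (\<lambda>\<mu>. \<mu> \<noteq> 0) L))"
    unfolding S_def using L
  proof (induction L)
    case (Cons \<mu> L)
    then have "\<mu> \<noteq> 0 \<Longrightarrow> \<mu> ^ p = 1" by (simp add: power_Suc2 del: power_Suc)
    with Cons p show ?case by auto
  qed simp
  have split_p: "{1..p} = insert p {1..<p}" using p by auto
  \<comment> \<open>Fourier inversion with the primitive root \<open>c\<close>: as \<open>S\<close> is constant on \<open>1..<p\<close>,
    the twisted sum collapses to \<open>S p - S 1\<close>.\<close>
  have "(\<Sum>t=1..p. c ^ t * S t) = (\<Sum>t=1..<p. c ^ t) * S 1 + c ^ p * S p"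
    using equal_sums unfolding split_p S_def by (simp add: sum_distrib_right add.commute)
  also have "(\<Sum>t=1..<p. c ^ t) = (\<Sum>t=1..p. c ^ t) - c ^ p"
    unfolding split_p by simp
  also have "\<dots> = -1" using root_of_unity_power_sum_eq_0[OF c_root c_ne_1] c_root by simp
  finally have "S 1 = S p - (\<Sum>t=1..p. c ^ t * S t)" using c_root by simp
  also have "(\<Sum>t=1..p. c ^ t * S t) = of_nat p * of_nat (length (filter (\<lambda>\<mu>. c * \<mu> = 1) L))"
    unfolding S_def by (rule twisted_power_sums_count[OF L c_root])
  finally have "S 1 = S p - of_nat p * of_nat (length (filter (\<lambda>\<mu>. c * \<mu> = 1) L))" .
  then show ?thesis unfolding S_p by (auto simp: S_def intro!: Ints_diff Ints_mult)
qed

lemma sum_list_power_product_lists: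
  fixes xss :: "'a::comm_semiring_1 list list"
  shows "(\<Sum>ys\<leftarrow>product_lists xss. prod_list ys ^ t) = (\<Prod>xs\<leftarrow>xss. \<Sum>x\<leftarrow>xs. x ^ t)"
proof (induction xss)
  case (Cons xs xss)
  have "(\<Sum>ys\<leftarrow>product_lists (xs # xss). prod_list ys ^ t)
      = (\<Sum>x\<leftarrow>xs. \<Sum>ys\<leftarrow>product_lists xss. (x * prod_list ys) ^ t)"
    by (induction xs) (auto simp: o_def)
  also have "\<dots> = (\<Sum>x\<leftarrow>xs. x ^ t) * (\<Sum>ys\<leftarrow>product_lists xss. prod_list ys ^ t)"
    by (simp add: power_mult_distrib sum_list_const_mult sum_list_mult_const)
  finally show ?case using Cons.IH by simp
qed simp

lemma prod_list_product_lists_power_eq_self: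
  fixes xss :: "'a::comm_monoid_mult list list"
  assumes "\<forall>xs\<in>set xss. \<forall>x\<in>set xs. x ^ q = x" "ys \<in> set (product_lists xss)"
  shows "prod_list ys ^ q = prod_list ys"
  using assms by (induction xss arbitrary: ys) (auto simp: power_mult_distrib)

lemma bij_betw_mult_mod_prime:
  fixes p t :: nat
  assumes p: "prime p" and t: "\<not> p dvd t"
  shows "bij_betw (\<lambda>j. j * t mod p) {1..<p} {1..<p}"
proof (rule inj_on_endo_imp_bij_betw)
  have ct: "coprime t p" using prime_imp_coprime[OF p t] by (simp add: ac_simps)
  show "inj_on (\<lambda>j. j * t mod p) {1..<p}"
  proof (rule inj_onI)
    fix x y assume xy: "x \<in> {1..<p}" "y \<in> {1..<p}" "x * t mod p = y * t mod p"
    then have "[x = y] (mod p)" using cong_mult_rcancel_nat[OF ct] by (simp add: cong_def)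
    with xy show "x = y" using cong_less_modulus_unique_nat by auto
  qed
  show "(\<lambda>j. j * t mod p) ` {1..<p} \<subseteq> {1..<p}"
  proof (rule image_subsetI)
    fix j assume "j \<in> {1..<p}"
    then have "\<not> p dvd j * t" using t p by (auto simp: prime_dvd_mult_iff dest: dvd_imp_le)
    then show "j * t mod p \<in> {1..<p}"
      using p by (simp add: dvd_eq_mod_eq_0 Suc_le_eq prime_gt_0_nat)
  qed
qed simp

lemma prod_power_sums_in_Ints:
  fixes es :: "complex list"
  assumes p: "prime p" and es: "\<forall>e\<in>set es. e ^ (p + 1) = e"
  shows "(\<Prod>j=1..<p. \<Sum>e\<leftarrow>es. e ^ j) \<in> \<int>"
proof -
  define xss where "xss = map (\<lambda>j. map (\<lambda>e. e ^ j) es) [1..<p]"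
  define L where "L = map prod_list (product_lists xss)"
  have power_sum_L: "(\<Sum>\<mu>\<leftarrow>L. \<mu> ^ t) = (\<Prod>j=1..<p. \<Sum>e\<leftarrow>es. e ^ (j * t))" for t
  proof -
    have "(\<Sum>\<mu>\<leftarrow>L. \<mu> ^ t) = (\<Prod>j\<leftarrow>[1..<p]. \<Sum>e\<leftarrow>es. e ^ (j * t))"
      unfolding L_def using sum_list_power_product_lists[where xss = xss and t = t]
      by (simp add: xss_def o_def power_mult)
    then show ?thesis by (metis distinct_upt prod.distinct_set_conv_list set_upt)
  qed
  \<comment> \<open>The product is a norm from the \<open>p\<close>-th cyclotomic field: the Galois automorphisms
    permute its factors.\<close>
  have invariant: "(\<Sum>\<mu>\<leftarrow>L. \<mu> ^ t) = (\<Prod>j=1..<p. \<Sum>e\<leftarrow>es. e ^ j)" if t: "t \<in> {1..<p}" for t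
  proof -
    have t_coprime: "\<not> p dvd t" using t by (auto dest: dvd_imp_le)
    have "(\<Prod>j=1..<p. \<Sum>e\<leftarrow>es. e ^ (j * t)) = (\<Prod>j=1..<p. \<Sum>e\<leftarrow>es. e ^ (j * t mod p))"
    proof (intro prod.cong refl arg_cong[of _ _ sum_list] map_cong)
      fix j e assume "j \<in> {1..<p}" "e \<in> set es"
      moreover from this have "\<not> p dvd j * t"
        using p t_coprime by (auto simp: prime_dvd_mult_iff dest: dvd_imp_le)
      ultimately show "e ^ (j * t) = e ^ (j * t mod p)" using es power_eq_power_mod by blast
    qed
    also have "\<dots> = (\<Prod>j=1..<p. \<Sum>e\<leftarrow>es. e ^ j)"
      by (rule prod.reindex_bij_betw[OF bij_betw_mult_mod_prime[OF p t_coprime]])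
    finally show ?thesis using power_sum_L by simp
  qed
  have "(e ^ j) ^ (p + 1) = e ^ j" if "e \<in> set es" for e j
    using es that by (metis power_mult mult.commute)
  then have xss_roots: "\<forall>xs\<in>set xss. \<forall>x\<in>set xs. x ^ (p + 1) = x" unfolding xss_def by auto
  have L_roots: "\<forall>\<mu>\<in>set L. \<mu> ^ (p + 1) = \<mu>"
  proof
    fix \<mu> assume "\<mu> \<in> set L"
    then obtain ys where "ys \<in> set (product_lists xss)" "\<mu> = prod_list ys" unfolding L_def by auto
    with prod_list_product_lists_power_eq_self[OF xss_roots] show "\<mu> ^ (p + 1) = \<mu>" by metis
  qed
  have one: "1 \<in> {1..<p}" using prime_gt_1_nat[OF p] by simp
  then have "\<forall>t\<in>{1..<p}. (\<Sum>\<mu>\<leftarrow>L. \<mu> ^ t) = (\<Sum>\<mu>\<leftarrow>L. \<mu>)"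
    using invariant invariant[OF one] by simp
  then have "(\<Sum>\<mu>\<leftarrow>L. \<mu>) \<in> \<int>" by (rule power_sum_in_Ints[OF prime_ge_2_nat[OF p] L_roots])
  then show ?thesis using invariant[OF one] by simp
qed

section \<open>Traces of powers of complex matrices\<close>

lemma mat_trace_mult_comm:
  assumes "X \<in> carrier_mat n m" "Y \<in> carrier_mat m n"
  shows "mat_trace (X * Y) = mat_trace (Y * X)"
proof -
  have "mat_trace (X * Y) = (\<Sum>i<n. \<Sum>k<m. X $$ (i, k) * Y $$ (k, i))"
    using assms unfolding mat_trace_def
    by (intro sum.cong) (auto simp: index_mult_mat scalar_prod_def atLeast0LessThan)
  also have "\<dots> = (\<Sum>k<m. \<Sum>i<n. Y $$ (k, i) * X $$ (i, k))"
    by (subst sum.swap) (simp add: mult.commute)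
  also have "\<dots> = mat_trace (Y * X)"
    using assms unfolding mat_trace_def
    by (intro sum.cong) (auto simp: index_mult_mat scalar_prod_def atLeast0LessThan)
  finally show ?thesis .
qed

lemma upper_triangular_mult:
  fixes U V :: "'a::semiring_0 mat"
  assumes U: "U \<in> carrier_mat n n" and V: "V \<in> carrier_mat n n"
    and "upper_triangular U" "upper_triangular V"
  shows "upper_triangular (U * V)"
    and "i < n \<Longrightarrow> (U * V) $$ (i, i) = U $$ (i, i) * V $$ (i, i)"
proof -
  have vanish: "U $$ (i, k) * V $$ (k, j) = 0" if "i < n" "k < n" "j < n" "k < i \<or> j < k" for i j k
    using assms that by (auto dest: upper_triangularD)
  show "upper_triangular (U * V)"
  proof (rule upper_triangularI)
    fix i j assume "j < i" "i < dim_row (U * V)"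
    with U V show "(U * V) $$ (i, j) = 0"
      by (auto simp: index_mult_mat scalar_prod_def intro!: sum.neutral vanish)
  qed
  assume i: "i < n"
  have "(U * V) $$ (i, i) = (\<Sum>k\<in>{0..<n}. U $$ (i, k) * V $$ (k, i))"
    using i U V by (simp add: index_mult_mat scalar_prod_def)
  also have "\<dots> = (\<Sum>k\<in>{i}. U $$ (i, k) * V $$ (k, i))"
    using i by (intro sum.mono_neutral_right) (auto intro!: vanish)
  finally show "(U * V) $$ (i, i) = U $$ (i, i) * V $$ (i, i)" by simp
qed

lemma upper_triangular_pow:
  fixes U :: "'a::semiring_1 mat"
  assumes U: "U \<in> carrier_mat n n" and "upper_triangular U"
  shows "upper_triangular (U ^\<^sub>m k) \<and> (\<forall>i<n. (U ^\<^sub>m k) $$ (i, i) = U $$ (i, i) ^ k)"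
proof (induction k)
  case (Suc k)
  have Uk: "U ^\<^sub>m k \<in> carrier_mat n n" using U by simp
  note mult = upper_triangular_mult[OF Uk U conjunct1[OF Suc] assms(2)]
  show ?case
    unfolding pow_mat.simps(2) using mult Suc by (simp add: power_Suc2 del: power_Suc)
qed (use U in auto)

lemma complex_mat_triangularizable:
  fixes A :: "complex mat"
  assumes A: "A \<in> carrier_mat n n"
  obtains U P Q where "U \<in> carrier_mat n n" "upper_triangular U" "similar_mat_wit A U P Q"
proof -
  obtain es where "char_poly A = (\<Prod>a\<leftarrow>es. [:- a, 1:])" using char_poly_factorized[OF A] by blast
  from schur_decomposition_exists[OF A this] that show ?thesis
    unfolding similar_mat_def by blast
qed

lemma mat_trace_pow_eq_eigenvalue_power_sum:
  fixes A :: "complex mat"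
  assumes A: "A \<in> carrier_mat n n" and A_pow: "A ^\<^sub>m q = A"
  obtains es where "\<And>k. mat_trace (A ^\<^sub>m k) = (\<Sum>e\<leftarrow>es. e ^ k)" "\<And>e. e \<in> set es \<Longrightarrow> e ^ q = e"
proof -
  obtain U P Q where U: "U \<in> carrier_mat n n" "upper_triangular U" and sim: "similar_mat_wit A U P Q"
    using complex_mat_triangularizable[OF A] by blast
  note PQ = similar_mat_witD2[OF A sim]
  have U_pow: "U ^\<^sub>m k = Q * A ^\<^sub>m k * P" for k
    using similar_mat_wit_pow_id[OF similar_mat_wit_sym[OF sim]] .
  have "mat_trace (A ^\<^sub>m k) = (\<Sum>e\<leftarrow>diag_mat U. e ^ k)" for k
  proof -
    have "mat_trace (A ^\<^sub>m k) = mat_trace (P * (Q * A ^\<^sub>m k))"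
      using PQ(1,6,7) A by (simp add: assoc_mult_mat[of P n n Q n "A ^\<^sub>m k" n, symmetric])
    also have "\<dots> = mat_trace ((Q * A ^\<^sub>m k) * P)"
      using PQ(6,7) A by (intro mat_trace_mult_comm[of _ n n]) auto
    also have "\<dots> = mat_trace (U ^\<^sub>m k)" by (simp add: U_pow)
    also have "\<dots> = (\<Sum>i<n. U $$ (i, i) ^ k)"
      using upper_triangular_pow[OF U, of k] U by (simp add: mat_trace_def)
    also have "\<dots> = (\<Sum>e\<leftarrow>diag_mat U. e ^ k)"
      using U by (simp add: diag_mat_def sum_list_sum_nth lessThan_atLeast0)
    finally show ?thesis .
  qed
  moreover have "e ^ q = e" if "e \<in> set (diag_mat U)" for e
  proof -
    obtain i where "i < n" "e = U $$ (i, i)" using \<open>e \<in> set (diag_mat U)\<close> U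
      unfolding diag_mat_def by auto
    moreover have "U ^\<^sub>m q = U" using U_pow[of q] U_pow[of 1] A A_pow by simp
    ultimately show ?thesis using upper_triangular_pow[OF U, of q] by auto
  qed
  ultimately show ?thesis using that by blast
qed

lemma prod_trace_powers_in_Ints:
  fixes X :: "complex mat"
  assumes "X \<in> carrier_mat n n" "X ^\<^sub>m (p + 1) = X" "prime p"
  shows "(\<Prod>j=1..<p. mat_trace (X ^\<^sub>m j)) \<in> \<int>"
proof -
  obtain es where "\<And>k. mat_trace (X ^\<^sub>m k) = (\<Sum>e\<leftarrow>es. e ^ k)" "\<And>e. e \<in> set es \<Longrightarrow> e ^ (p + 1) = e"
    using mat_trace_pow_eq_eigenvalue_power_sum[OF assms(1,2)] by blast
  with prod_power_sums_in_Ints[OF assms(3)] show ?thesis by simp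
qed

section \<open>Powers in finite groups\<close>

lemma exists_coprime_cong:
  fixes n p j :: nat
  assumes p: "prime p" and "n > 0" and j: "\<not> p dvd j"
  shows "\<exists>k. [k = j] (mod p) \<and> coprime k n"
proof -
  obtain r where n: "n = p ^ multiplicity p n * r" and r: "\<not> p dvd r"
    using multiplicity_decompose'[of n p] \<open>n > 0\<close> not_prime_unit p by blast
  have "coprime p r" using p r by (simp add: prime_imp_coprime)
  then obtain k where k: "[k = j] (mod p)" "[k = 1] (mod r)"
    using binary_chinese_remainder_nat by blast
  have "coprime j p" using prime_imp_coprime[OF p j] by (simp add: ac_simps)
  then have "coprime k p" using k(1) cong_imp_coprime cong_sym by blast
  moreover have "coprime k r" using k(2) cong_imp_coprime cong_sym coprime_1_left by blast
  ultimately have "coprime k (p ^ multiplicity p n * r)" by simp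
  with k n show ?thesis by metis
qed

lemma (in group) subgroup_nat_pow_closed:
  assumes "subgroup H G" "h \<in> H"
  shows "h [^] (k::nat) \<in> H"
  using subgroup_int_pow_closed[OF assms, of "int k"] by (simp add: int_pow_int)

lemma (in group) pow_mod_card_carrier:
  assumes "finite (carrier G)" "x \<in> carrier G"
  shows "x [^] (m mod card (carrier G)) = x [^] m"
proof -
  have one: "x [^] card (carrier G) = \<one>" using pow_order_eq_1[OF assms(2)] unfolding Coset.order_def .
  have "x [^] m = x [^] (card (carrier G) * (m div card (carrier G)) + m mod card (carrier G))"
    by (simp only: mult_div_mod_eq)
  also have "\<dots> = (x [^] card (carrier G)) [^] (m div card (carrier G)) \<otimes> x [^] (m mod card (carrier G))"
    using assms(2) by (simp only: nat_pow_mult[symmetric] nat_pow_pow nat_pow_closed)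
  finally show ?thesis using assms(2) by (simp add: one)
qed

lemma (in group) inj_on_pow_coprime_card:
  assumes fin: "finite (carrier G)" and k: "coprime k (card (carrier G))"
  shows "inj_on (\<lambda>x. x [^] k) (carrier G)"
proof -
  obtain k' where "[k * k' = 1] (mod card (carrier G))" using cong_solve_coprime_nat[OF k] by auto
  then have kk': "(k * k') mod card (carrier G) = 1 mod card (carrier G)" by (simp add: cong_def)
  have "(x [^] k) [^] k' = x" if x: "x \<in> carrier G" for x
  proof -
    have "(x [^] k) [^] k' = x [^] ((k * k') mod card (carrier G))"
      using fin x by (simp add: nat_pow_pow pow_mod_card_carrier)
    also have "\<dots> = x [^] (1::nat)" unfolding kk' using fin x by (rule pow_mod_card_carrier)
    finally show ?thesis using x by simp
  qed
  then show ?thesis by (rule inj_on_inverseI)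
qed

lemma (in group) pow_in_coset_of_pow_mod:
  fixes p k :: nat
  assumes N: "subgroup N G" and x: "x \<in> carrier G" "x [^] p \<in> N"
  shows "\<exists>n\<in>N. x [^] k = x [^] (k mod p) \<otimes> n"
proof
  show "(x [^] p) [^] (k div p) \<in> N" using subgroup_nat_pow_closed[OF N x(2)] .
  have "x [^] k = x [^] (k mod p + p * (k div p))" by simp
  also have "\<dots> = x [^] (k mod p) \<otimes> (x [^] p) [^] (k div p)"
    using x by (simp only: nat_pow_mult nat_pow_pow)
  finally show "x [^] k = x [^] (k mod p) \<otimes> (x [^] p) [^] (k div p)" .
qed

lemma (in group) mem_subgroup_if_mult_mem:
  assumes "subgroup N G" "x \<in> carrier G" "n \<in> N" "x \<otimes> n \<in> N"
  shows "x \<in> N"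
proof -
  have "n \<in> carrier G" using assms subgroup.subset by blast
  then have "x = (x \<otimes> n) \<otimes> inv n" using assms(2) by (simp add: m_assoc)
  with assms show ?thesis by (metis subgroup.m_closed subgroup.m_inv_closed)
qed

lemma (in group) pow_coprime_notin_subgroup:
  fixes p j :: nat
  assumes N: "subgroup N G" and x: "x \<in> carrier G" "x \<notin> N" "x [^] p \<in> N"
    and p: "prime p" and j: "\<not> p dvd j"
  shows "x [^] j \<notin> N"
proof
  assume xj: "x [^] j \<in> N"
  have "coprime j p" using prime_imp_coprime[OF p j] by (simp add: ac_simps)
  then obtain u where "[j * u = 1] (mod p)" using cong_solve_coprime_nat by auto
  then have ju: "(j * u) mod p = 1" using prime_gt_1_nat[OF p] by (simp add: cong_def)
  obtain n where n: "n \<in> N" "x [^] (j * u) = x [^] ((j * u) mod p) \<otimes> n"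
    using pow_in_coset_of_pow_mod[OF N x(1,3)] by blast
  have "x [^] (j * u) \<in> N"
    using subgroup_nat_pow_closed[OF N xj, of u] x(1) by (simp add: nat_pow_pow)
  then have "x \<otimes> n \<in> N" using n ju x(1) by simp
  with x show False using mem_subgroup_if_mult_mem[OF N x(1) n(1)] by blast
qed

lemma (in group) coset_contains_prime_power_ord:
  fixes p :: nat
  assumes fin: "finite (carrier G)" and N: "subgroup N G"
    and x: "x \<in> carrier G" "x \<notin> N" "x [^] p \<in> N" and p: "prime p"
  shows "\<exists>n\<in>N. \<exists>b\<ge>1. ord (x \<otimes> n) = p ^ b"
proof -
  have "ord x \<noteq> 0" using ord_ge_1[OF fin x(1)] by simp
  then obtain r where ord_x: "ord x = p ^ multiplicity p (ord x) * r" and r: "\<not> p dvd r"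
    using multiplicity_decompose'[of "ord x" p] not_prime_unit p by blast
  have "coprime r p" using prime_imp_coprime[OF p r] by (simp add: ac_simps)
  then obtain u where "[r * u = 1] (mod p)" using cong_solve_coprime_nat by auto
  then have ru: "(r * u) mod p = 1" using prime_gt_1_nat[OF p] by (simp add: cong_def)
  \<comment> \<open>\<open>x [^] (r * u)\<close> kills the \<open>p'\<close>-part of \<open>x\<close> and still lies in the coset \<open>xN\<close>.\<close>
  obtain n where n: "n \<in> N" "x [^] (r * u) = x [^] ((r * u) mod p) \<otimes> n"
    using pow_in_coset_of_pow_mod[OF N x(1,3)] by blast
  define y where "y = x \<otimes> n"
  have nG: "n \<in> carrier G" using n N subgroup.subset by blast
  then have yG: "y \<in> carrier G" unfolding y_def using x by simp
  have y: "y = x [^] (r * u)" using n ru x(1) unfolding y_def by simp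
  have "y [^] (p ^ multiplicity p (ord x)) = (x [^] ord x) [^] u"
    using x(1) y by (subst ord_x) (simp add: nat_pow_pow ac_simps)
  then have "ord y dvd p ^ multiplicity p (ord x)"
    using x(1) yG by (simp add: pow_eq_id[symmetric])
  then obtain b where b: "ord y = p ^ b" using divides_primepow_nat[OF p] by blast
  have "b \<noteq> 0"
  proof
    assume "b = 0"
    then have "x \<otimes> n \<in> N" using b ord_eq_1[OF yG] subgroup.one_closed[OF N] unfolding y_def by simp
    with x show False using mem_subgroup_if_mult_mem[OF N x(1) n(1)] by blast
  qed
  with n(1) b show ?thesis unfolding y_def by (intro bexI[of _ n] exI[of _ b]) auto
qed

section \<open>Descending a solvable group through sections of prime exponent\<close>

locale prime_exponent_section = group G for G (structure) +
  fixes H N :: "'a set" and p :: nat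
  assumes subgroup_H: "subgroup H G" and subgroup_N: "subgroup N G" and N_subset_H: "N \<subseteq> H"
    and normalizes: "\<And>h n. h \<in> H \<Longrightarrow> n \<in> N \<Longrightarrow> h \<otimes> n \<otimes> inv h \<in> N"
    and prime_p: "prime p"
    and pow_p_in_N: "\<And>h. h \<in> H \<Longrightarrow> h [^] p \<in> N"

locale commutator_section = group G for G (structure) +
  fixes A B :: "'a set"
  assumes subgroup_A: "subgroup A G" and subgroup_B: "subgroup B G" and B_subset_A: "B \<subseteq> A"
    and commutator_in_B: "\<And>x y. x \<in> A \<Longrightarrow> y \<in> A \<Longrightarrow> x \<otimes> y \<otimes> inv x \<otimes> inv y \<in> B"
begin

lemma A_carrier: "A \<subseteq> carrier G" and B_carrier: "B \<subseteq> carrier G"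
  using subgroup_A subgroup_B subgroup.subset by blast+

lemma normalizes_intermediate:
  assumes S: "subgroup S G" "B \<subseteq> S" "S \<subseteq> A" and a: "a \<in> A" and s: "s \<in> S"
  shows "a \<otimes> s \<otimes> inv a \<in> S"
proof -
  have sA: "s \<in> A" using s S by blast
  have aG: "a \<in> carrier G" and sG: "s \<in> carrier G" using a sA A_carrier by auto
  then have "a \<otimes> s \<otimes> inv a = (a \<otimes> s \<otimes> inv a \<otimes> inv s) \<otimes> s" by (simp add: m_assoc)
  moreover have "a \<otimes> s \<otimes> inv a \<otimes> inv s \<in> S" using commutator_in_B[OF a sA] S by blast
  ultimately show ?thesis using subgroup.m_closed[OF S(1)] s by metis
qed

lemma commute_mod_B:
  assumes x: "x \<in> A" and y: "y \<in> A"
  shows "\<exists>c\<in>B. x \<otimes> y = y \<otimes> x \<otimes> c"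
proof
  have xG: "x \<in> carrier G" and yG: "y \<in> carrier G" using x y A_carrier by auto
  show "inv x \<otimes> inv y \<otimes> x \<otimes> y \<in> B"
    using commutator_in_B[of "inv x" "inv y"] x y subgroup.m_inv_closed[OF subgroup_A] xG yG by simp
  show "x \<otimes> y = y \<otimes> x \<otimes> (inv x \<otimes> inv y \<otimes> x \<otimes> y)"
    using xG yG by (simp add: m_assoc[symmetric] inv_mult_group[symmetric])
qed

lemma pow_mult_mod_B:
  assumes x: "x \<in> A" and y: "y \<in> A"
  shows "\<exists>c\<in>B. (x \<otimes> y) [^] (n::nat) = x [^] n \<otimes> y [^] n \<otimes> c"
proof (induction n)
  case 0
  then show ?case using subgroup.one_closed[OF subgroup_B] by force
next
  case (Suc n)
  have xG: "x \<in> carrier G" and yG: "y \<in> carrier G" using x y A_carrier by auto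
  obtain c where c: "c \<in> B" "(x \<otimes> y) [^] n = x [^] n \<otimes> y [^] n \<otimes> c" using Suc by blast
  have cG: "c \<in> carrier G" using c B_carrier by blast
  have w: "y [^] n \<otimes> c \<in> A"
    using subgroup_nat_pow_closed[OF subgroup_A y] c B_subset_A subgroup.m_closed[OF subgroup_A] by blast
  obtain c' where c': "c' \<in> B" "y [^] n \<otimes> c \<otimes> x = x \<otimes> (y [^] n \<otimes> c) \<otimes> c'"
    using commute_mod_B[OF w x] by blast
  have c'G: "c' \<in> carrier G" using c' B_carrier by blast
  have "inv y \<otimes> (c \<otimes> c') \<otimes> y \<in> B"
    using normalizes_intermediate[OF subgroup_B order_refl B_subset_A, of "inv y"] y yG
      subgroup.m_inv_closed[OF subgroup_A] subgroup.m_closed[OF subgroup_B c(1) c'(1)] by simp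
  moreover have "(x \<otimes> y) [^] Suc n = x [^] Suc n \<otimes> y [^] Suc n \<otimes> (inv y \<otimes> (c \<otimes> c') \<otimes> y)"
  proof -
    have "(x \<otimes> y) [^] Suc n = x [^] n \<otimes> (y [^] n \<otimes> c \<otimes> x) \<otimes> y"
      using c xG yG cG by (simp add: m_assoc)
    also have "\<dots> = x [^] Suc n \<otimes> y [^] n \<otimes> (c \<otimes> c') \<otimes> y"
      using c' xG yG cG c'G by (simp add: m_assoc nat_pow_Suc2 del: nat_pow_Suc)
    also have "\<dots> = x [^] Suc n \<otimes> y [^] Suc n \<otimes> (inv y \<otimes> (c \<otimes> c') \<otimes> y)"
      using xG yG cG c'G by (simp add: m_assoc m_assoc[symmetric, of y "inv y"] del: nat_pow_Suc)
    finally show ?thesis .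
  qed
  ultimately show ?case by blast
qed

definition power_layer :: "nat \<Rightarrow> 'a set" where
  "power_layer m = generate G (B \<union> (\<lambda>x. x [^] m) ` A)"

lemma generators_carrier: "B \<union> (\<lambda>x. x [^] (m::nat)) ` A \<subseteq> carrier G"
  using A_carrier B_carrier by auto

lemma subgroup_power_layer: "subgroup (power_layer m) G"
  unfolding power_layer_def by (rule generate_is_subgroup[OF generators_carrier])

lemma B_subset_power_layer: "B \<subseteq> power_layer m"
  unfolding power_layer_def by (auto intro: generate.incl)

lemma pow_in_power_layer: "x \<in> A \<Longrightarrow> x [^] m \<in> power_layer m"
  unfolding power_layer_def by (auto intro: generate.incl)

lemma power_layer_subset_A: "power_layer m \<subseteq> A"
  unfolding power_layer_def using B_subset_A subgroup_nat_pow_closed[OF subgroup_A]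
  by (intro generate_subgroup_incl[OF _ subgroup_A]) auto

lemma power_layer_1: "power_layer 1 = A"
proof
  show "A \<subseteq> power_layer 1"
  proof
    fix x assume x: "x \<in> A"
    then have "x = x [^] (1::nat)" using A_carrier by auto
    then show "x \<in> power_layer 1" using pow_in_power_layer[OF x, of 1] by simp
  qed
qed (rule power_layer_subset_A)

lemma power_layer_card:
  assumes "finite (carrier G)"
  shows "power_layer (card (carrier G)) = B"
proof
  have "x [^] card (carrier G) = \<one>" if "x \<in> A" for x
    using pow_order_eq_1[of x] that A_carrier unfolding Coset.order_def by auto
  then show "power_layer (card (carrier G)) \<subseteq> B"
    unfolding power_layer_def using subgroup.one_closed[OF subgroup_B]
    by (intro generate_subgroup_incl[OF _ subgroup_B]) auto
qed (rule B_subset_power_layer)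

lemma power_layer_antimono: "power_layer (m * q) \<subseteq> power_layer m"
proof -
  have "x [^] (m * q) \<in> power_layer m" if "x \<in> A" for x
    using pow_in_power_layer[OF subgroup_nat_pow_closed[OF subgroup_A that, of q], of m] that A_carrier
    by (auto simp: nat_pow_pow mult.commute)
  then show ?thesis
    unfolding power_layer_def[of "m * q"] using B_subset_power_layer[of m]
    by (intro generate_subgroup_incl[OF _ subgroup_power_layer]) auto
qed

lemma pow_power_layer:
  assumes z: "z \<in> power_layer m"
  shows "z [^] q \<in> power_layer (m * q)"
  using z[unfolded power_layer_def]
proof (induction rule: generate.induct)
  case one
  then show ?case using subgroup.one_closed[OF subgroup_power_layer] by simp
next
  case (incl h)
  then show ?case
    using subgroup_nat_pow_closed[OF subgroup_B] B_subset_power_layer pow_in_power_layer A_carrier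
    by (auto simp: nat_pow_pow)
next
  case (inv h)
  then have "h [^] q \<in> power_layer (m * q)"
    using subgroup_nat_pow_closed[OF subgroup_B] B_subset_power_layer pow_in_power_layer A_carrier
    by (auto simp: nat_pow_pow)
  moreover have "h \<in> carrier G" using inv generators_carrier by blast
  ultimately show ?case using subgroup.m_inv_closed[OF subgroup_power_layer] by (simp add: nat_pow_inv)
next
  case (eng h1 h2)
  have "h1 \<in> A" "h2 \<in> A"
    using eng(1,2) power_layer_subset_A unfolding power_layer_def by auto
  then obtain c where "c \<in> B" "(h1 \<otimes> h2) [^] q = h1 [^] q \<otimes> h2 [^] q \<otimes> c"
    using pow_mult_mod_B by blast
  with eng(3,4) show ?case
    by (simp add: subgroup.m_closed[OF subgroup_power_layer] B_subset_power_layer[THEN subsetD])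
qed

lemma prime_exponent_section_power_layer:
  assumes "prime q"
  shows "prime_exponent_section G (power_layer m) (power_layer (m * q)) q"
  by (intro prime_exponent_section.intro prime_exponent_section_axioms.intro is_group)
    (auto intro: subgroup_power_layer power_layer_antimono[THEN subsetD] pow_power_layer assms
      normalizes_intermediate[OF subgroup_power_layer B_subset_power_layer power_layer_subset_A]
      dest: power_layer_subset_A[THEN subsetD])

lemma le_if_monotone_on_prime_exponent_sections:
  fixes E :: "'a set \<Rightarrow> 'c::preorder"
  assumes fin: "finite (carrier G)"
    and mono: "\<And>H N p. prime_exponent_section G H N p \<Longrightarrow> E N \<le> E H"
  shows "E B \<le> E A"
proof -
  have "E (power_layer m) \<le> E A" if "m \<ge> 1" for m
    using that
  proof (induction m rule: less_induct)
    case (less m)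
    show ?case
    proof (cases "m = 1")
      case False
      then obtain q where q: "prime q" "q dvd m" using prime_factor_nat by blast
      then obtain m' where m': "m = m' * q" by (metis dvd_def mult.commute)
      moreover have "1 < q" using prime_gt_1_nat[OF q(1)] .
      moreover have "m' \<noteq> 0" using less.prems m' by auto
      ultimately have "1 \<le> m'" "m' < m" by simp_all
      then have "E (power_layer m') \<le> E A" by (rule less.IH[rotated])
      moreover have "E (power_layer m) \<le> E (power_layer m')"
        unfolding m' by (rule mono[OF prime_exponent_section_power_layer[OF q(1)]])
      ultimately show ?thesis by (rule order_trans[rotated])
    qed (simp add: power_layer_1[unfolded One_nat_def])
  qed
  moreover have "card (carrier G) \<ge> 1" using fin one_closed by (auto simp: Suc_le_eq card_gt_0_iff)
  ultimately show ?thesis using power_layer_card[OF fin] by metis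
qed

end

lemma (in group) solvable_le_if_monotone_on_prime_exponent_sections:
  fixes E :: "'a set \<Rightarrow> 'c::preorder"
  assumes fin: "finite (carrier G)" and "solvable G"
    and mono: "\<And>H N p. prime_exponent_section G H N p \<Longrightarrow> E N \<le> E H"
  shows "E {\<one>} \<le> E (carrier G)"
proof -
  define D where "D i = (derived G ^^ i) (carrier G)" for i
  have subgroup_D: "subgroup (D i) G" for i
    unfolding D_def by (rule exp_of_derived_is_subgroup[OF subgroup_self])
  have "E (D i) \<le> E (carrier G)" for i
  proof (induction i)
    case (Suc i)
    have "commutator_section G (D i) (D (Suc i))"
    proof (intro commutator_section.intro commutator_section_axioms.intro is_group subgroup_D)
      show "D (Suc i) \<subseteq> D i" unfolding D_def by (simp add: derived_incl subgroup_D[unfolded D_def])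
      show "x \<otimes> y \<otimes> inv x \<otimes> inv y \<in> D (Suc i)" if "x \<in> D i" "y \<in> D i" for x y
        using that unfolding D_def derived_def by (auto intro: generate.incl)
    qed
    then have "E (D (Suc i)) \<le> E (D i)"
      by (rule commutator_section.le_if_monotone_on_prime_exponent_sections[OF _ fin mono])
    then show ?case using Suc.IH by (rule order_trans)
  qed (simp add: D_def)
  moreover obtain n where "D n = {\<one>}"
    using \<open>solvable G\<close> solvable_iff_trivial_derived_seq unfolding D_def by blast
  ultimately show ?thesis by metis
qed

section \<open>Averaging a representation over a subgroup\<close>

locale nonneg_real_rep = group G for G (structure) +
  fixes d :: nat and \<rho> :: "'a \<Rightarrow> complex mat" and \<psi> :: "'a \<Rightarrow> complex"
  assumes finite_carrier: "finite (carrier G)"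
    and rep: "is_rep G d \<rho>"
    and trace_rep: "\<And>g. g \<in> carrier G \<Longrightarrow> \<psi> g = mat_trace (\<rho> g)"
    and real_psi: "\<And>g. g \<in> carrier G \<Longrightarrow> \<psi> g \<in> \<real>"
    and nonneg_psi: "\<And>g. g \<in> carrier G \<Longrightarrow> 0 \<le> Re (\<psi> g)"
begin

lemma rep_carrier: "g \<in> carrier G \<Longrightarrow> \<rho> g \<in> carrier_mat d d"
  and rep_mult: "g \<in> carrier G \<Longrightarrow> h \<in> carrier G \<Longrightarrow> \<rho> (g \<otimes> h) = \<rho> g * \<rho> h"
  and rep_one: "\<rho> \<one> = 1\<^sub>m d"
  using rep unfolding is_rep_def by blast+

lemma of_real_Re_psi: "g \<in> carrier G \<Longrightarrow> complex_of_real (Re (\<psi> g)) = \<psi> g"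
  using real_psi by (simp add: of_real_Re)

definition excess :: "'a set \<Rightarrow> real" where
  "excess S = (\<Sum>x\<in>S. Re (\<psi> x)) - real (card S)"

definition average :: "'a set \<Rightarrow> complex mat" where
  "average N = mat d d (\<lambda>(i, j). (\<Sum>n\<in>N. \<rho> n $$ (i, j)) / of_nat (card N))"

definition coset_mean :: "'a set \<Rightarrow> 'a \<Rightarrow> real" where
  "coset_mean N x = (\<Sum>n\<in>N. Re (\<psi> (x \<otimes> n))) / real (card N)"

lemma average_carrier: "average N \<in> carrier_mat d d"
  unfolding average_def by simp

context
  fixes N :: "'a set"
  assumes N: "subgroup N G"
begin

lemma N_carrier: "N \<subseteq> carrier G" and finite_N: "finite N" and card_N_pos: "card N > 0"
  using subgroup.subset[OF N] finite_subset finite_carrier subgroup.one_closed[OF N]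
  by (blast, blast, metis card_gt_0_iff empty_iff finite_subset)

lemma mem_carrier_if_mem_N [simp]: "n \<in> N \<Longrightarrow> n \<in> carrier G"
  using N_carrier by blast

lemma mult_average:
  assumes X: "X \<in> carrier_mat d d"
  shows "X * average N = mat d d (\<lambda>(i, j). (\<Sum>n\<in>N. (X * \<rho> n) $$ (i, j)) / of_nat (card N))"
    (is "_ = ?M")
proof (rule eq_matI)
  fix i j assume "i < dim_row ?M" "j < dim_col ?M"
  then have ij: "i < d" "j < d" by auto
  have "(X * average N) $$ (i, j) = (\<Sum>k<d. \<Sum>n\<in>N. X $$ (i, k) * \<rho> n $$ (k, j)) / of_nat (card N)"
    using ij X by (simp add: average_def index_mult_mat scalar_prod_def sum_distrib_left
        sum_divide_distrib atLeast0LessThan)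
  also have "\<dots> = (\<Sum>n\<in>N. (X * \<rho> n) $$ (i, j)) / of_nat (card N)"
  proof -
    have "(X * \<rho> n) $$ (i, j) = (\<Sum>k<d. X $$ (i, k) * \<rho> n $$ (k, j))" if "n \<in> N" for n
      using ij X rep_carrier[OF mem_carrier_if_mem_N[OF that]]
      by (simp add: index_mult_mat scalar_prod_def atLeast0LessThan)
    then show ?thesis by (subst sum.swap) simp
  qed
  finally show "(X * average N) $$ (i, j) = ?M $$ (i, j)" using ij by simp
qed (use X in \<open>auto simp: average_def\<close>)

lemma average_mult:
  assumes X: "X \<in> carrier_mat d d"
  shows "average N * X = mat d d (\<lambda>(i, j). (\<Sum>n\<in>N. (\<rho> n * X) $$ (i, j)) / of_nat (card N))"
    (is "_ = ?M")
proof (rule eq_matI)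
  fix i j assume "i < dim_row ?M" "j < dim_col ?M"
  then have ij: "i < d" "j < d" by auto
  have "(average N * X) $$ (i, j) = (\<Sum>k<d. \<Sum>n\<in>N. \<rho> n $$ (i, k) * X $$ (k, j)) / of_nat (card N)"
    using ij X by (simp add: average_def index_mult_mat scalar_prod_def sum_distrib_right
        sum_divide_distrib atLeast0LessThan)
  also have "\<dots> = (\<Sum>n\<in>N. (\<rho> n * X) $$ (i, j)) / of_nat (card N)"
  proof -
    have "(\<rho> n * X) $$ (i, j) = (\<Sum>k<d. \<rho> n $$ (i, k) * X $$ (k, j))" if "n \<in> N" for n
      using ij X rep_carrier[OF mem_carrier_if_mem_N[OF that]]
      by (simp add: index_mult_mat scalar_prod_def atLeast0LessThan)
    then show ?thesis by (subst sum.swap) simp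
  qed
  finally show "(average N * X) $$ (i, j) = ?M $$ (i, j)" using ij by simp
qed (use X in \<open>auto simp: average_def\<close>)

lemma rep_mult_average:
  assumes n0: "n0 \<in> N"
  shows "\<rho> n0 * average N = average N"
proof -
  have n0G: "n0 \<in> carrier G" using n0 N_carrier by blast
  have "(\<Sum>n\<in>N. (\<rho> n0 * \<rho> n) $$ (i, j)) = (\<Sum>n\<in>N. \<rho> n $$ (i, j))" for i j
  proof -
    have "(\<Sum>n\<in>N. (\<rho> n0 * \<rho> n) $$ (i, j)) = (\<Sum>n\<in>N. \<rho> (n0 \<otimes> n) $$ (i, j))"
      using n0G by (simp add: rep_mult)
    also have "\<dots> = (\<Sum>n\<in>N. \<rho> n $$ (i, j))"
      using n0G subgroup.m_closed[OF N n0]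
      by (intro sum_bij_endo[of N "(\<otimes>) n0" "\<lambda>g. \<rho> g $$ (i, j)"] finite_N) (auto simp: inj_on_def)
    finally show ?thesis .
  qed
  then show ?thesis using mult_average[OF rep_carrier[OF n0G]] unfolding average_def by simp
qed

lemma average_idem: "average N * average N = average N"
  unfolding average_mult[OF average_carrier]
  using rep_mult_average card_N_pos by (intro eq_matI) (simp_all add: average_def)

lemma rep_commute_average:
  assumes h: "h \<in> carrier G" and normal: "\<And>n. n \<in> N \<Longrightarrow> h \<otimes> n \<otimes> inv h \<in> N"
  shows "\<rho> h * average N = average N * \<rho> h"
proof -
  have "(\<Sum>n\<in>N. (\<rho> h * \<rho> n) $$ (i, j)) = (\<Sum>n\<in>N. (\<rho> n * \<rho> h) $$ (i, j))" for i j
  proof -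
    have "(\<Sum>n\<in>N. (\<rho> h * \<rho> n) $$ (i, j)) = (\<Sum>n\<in>N. \<rho> ((h \<otimes> n \<otimes> inv h) \<otimes> h) $$ (i, j))"
      using h by (intro sum.cong) (auto simp: m_assoc rep_mult)
    also have "\<dots> = (\<Sum>n\<in>N. \<rho> (n \<otimes> h) $$ (i, j))"
      using normal h
      by (intro sum_bij_endo[of N "\<lambda>n. h \<otimes> n \<otimes> inv h" "\<lambda>g. \<rho> (g \<otimes> h) $$ (i, j)"] finite_N)
        (auto simp: inj_on_def)
    also have "\<dots> = (\<Sum>n\<in>N. (\<rho> n * \<rho> h) $$ (i, j))"
      using h by (simp add: rep_mult)
    finally show ?thesis .
  qed
  then show ?thesis
    unfolding mult_average[OF rep_carrier[OF h]] average_mult[OF rep_carrier[OF h]] by simp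
qed

lemma trace_rep_mult_average:
  assumes x: "x \<in> carrier G"
  shows "mat_trace (\<rho> x * average N) = complex_of_real (coset_mean N x)"
proof -
  have "mat_trace (\<rho> x * average N) = (\<Sum>n\<in>N. \<Sum>i<d. (\<rho> x * \<rho> n) $$ (i, i)) / of_nat (card N)"
    unfolding mult_average[OF rep_carrier[OF x]] mat_trace_def
    by (simp add: sum_divide_distrib[symmetric] sum.swap[of _ "{..<d}"])
  also have "\<dots> = (\<Sum>n\<in>N. complex_of_real (Re (\<psi> (x \<otimes> n)))) / of_nat (card N)"
  proof -
    have "complex_of_real (Re (\<psi> (x \<otimes> n))) = (\<Sum>i<d. (\<rho> x * \<rho> n) $$ (i, i))" if "n \<in> N" for n
    proof -
      have "complex_of_real (Re (\<psi> (x \<otimes> n))) = \<psi> (x \<otimes> n)"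
        using x that by (simp add: of_real_Re_psi)
      also have "\<dots> = mat_trace (\<rho> x * \<rho> n)"
        using x that by (simp add: trace_rep rep_mult)
      finally have "complex_of_real (Re (\<psi> (x \<otimes> n))) = mat_trace (\<rho> x * \<rho> n)" .
      then show ?thesis using rep_carrier[OF x] by (simp add: mat_trace_def)
    qed
    then show ?thesis by simp
  qed
  finally show ?thesis unfolding coset_mean_def by simp
qed

lemma coset_mean_mult_right:
  assumes x: "x \<in> carrier G" and n0: "n0 \<in> N"
  shows "coset_mean N (x \<otimes> n0) = coset_mean N x"
proof -
  have n0G: "n0 \<in> carrier G" using n0 N_carrier by blast
  have "(\<Sum>n\<in>N. Re (\<psi> (x \<otimes> n0 \<otimes> n))) = (\<Sum>n\<in>N. Re (\<psi> (x \<otimes> n)))"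
    using x n0G subgroup.m_closed[OF N n0]
    by (subst sum_bij_endo[OF finite_N, of "(\<otimes>) n0" "\<lambda>n. Re (\<psi> (x \<otimes> n))", symmetric])
      (auto simp: inj_on_def m_assoc)
  then show ?thesis unfolding coset_mean_def by simp
qed

lemma coset_mean_nonneg: "x \<in> carrier G \<Longrightarrow> 0 \<le> coset_mean N x"
  unfolding coset_mean_def using N_carrier nonneg_psi
  by (auto intro!: sum_nonneg divide_nonneg_nonneg)

lemma pow_rep_mult_average:
  assumes m: "m \<in> carrier G" and normal: "\<And>n. n \<in> N \<Longrightarrow> m \<otimes> n \<otimes> inv m \<in> N"
  shows "(\<rho> m * average N) ^\<^sub>m Suc k = \<rho> (m [^] Suc k) * average N"
proof (induction k)
  case 0
  show ?case using m rep_carrier[OF m] average_carrier[of N] by simp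
next
  case (Suc k)
  note carriers = rep_carrier[OF m] rep_carrier[OF nat_pow_closed[OF m, of "Suc k"]] average_carrier[of N]
  have "(\<rho> m * average N) ^\<^sub>m Suc (Suc k) = \<rho> (m [^] Suc k) * (average N * \<rho> m) * average N"
    using Suc carriers by (simp add: assoc_mult_mat[of _ d d _ d _ d])
  also have "\<dots> = \<rho> (m [^] Suc k) * \<rho> m * (average N * average N)"
    using carriers by (simp add: rep_commute_average[OF m normal, symmetric] assoc_mult_mat[of _ d d _ d _ d])
  also have "\<dots> = \<rho> (m [^] Suc (Suc k)) * average N"
    using m by (simp add: average_idem rep_mult del: nat_pow_Suc)
  finally show ?case .
qed

lemma sum_coset_mean:
  assumes H: "subgroup H G" "N \<subseteq> H"
  shows "(\<Sum>x\<in>H. coset_mean N x) = (\<Sum>x\<in>H. Re (\<psi> x))"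
proof -
  have finite_H: "finite H" using subgroup.subset[OF H(1)] finite_carrier finite_subset by blast
  have H_mem: "x \<in> H \<Longrightarrow> x \<in> carrier G" for x using subgroup.subset[OF H(1)] by blast
  have "(\<Sum>x\<in>H. coset_mean N x) = (\<Sum>n\<in>N. \<Sum>x\<in>H. Re (\<psi> (x \<otimes> n))) / real (card N)"
    unfolding coset_mean_def by (simp add: sum_divide_distrib[symmetric] sum.swap[of _ H])
  also have "\<dots> = (\<Sum>n\<in>N. \<Sum>x\<in>H. Re (\<psi> x)) / real (card N)"
  proof -
    have "(\<Sum>x\<in>H. Re (\<psi> (x \<otimes> n))) = (\<Sum>x\<in>H. Re (\<psi> x))" if n: "n \<in> N" for n
      using n H subgroup.m_closed[OF H(1)]
      by (intro sum_bij_endo[of H "\<lambda>x. x \<otimes> n" "\<lambda>x. Re (\<psi> x)"] finite_H)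
        (auto simp: inj_on_def H_mem)
    then show ?thesis by simp
  qed
  finally show ?thesis using card_N_pos by simp
qed

end

lemma excess_trivial: "excess {\<one>} = real d - 1"
  using trace_rep[OF one_closed] rep_one by (simp add: excess_def mat_trace_def)

lemma excess_carrier:
  assumes "char_inner G \<psi> (\<lambda>_. 1) = 1"
  shows "excess (carrier G) = 0"
proof -
  have "card (carrier G) > 0" using finite_carrier one_closed card_gt_0_iff by blast
  with assms have "(\<Sum>g\<in>carrier G. \<psi> g) = of_nat (card (carrier G))"
    unfolding char_inner_def Coset.order_def by (simp add: divide_eq_1_iff)
  then have "(\<Sum>g\<in>carrier G. Re (\<psi> g)) = real (card (carrier G))"
    by (simp flip: Re_sum)
  then show ?thesis by (simp add: excess_def)
qed

lemma excess_carrier_neg_if_degree_0: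
  assumes "d = 0"
  shows "excess (carrier G) < 0"
proof -
  have "\<psi> g = 0" if "g \<in> carrier G" for g
    using trace_rep[OF that] rep_carrier[OF that] assms by (simp add: mat_trace_def)
  then have "(\<Sum>g\<in>carrier G. Re (\<psi> g)) = 0" by simp
  moreover have "card (carrier G) > 0" using finite_carrier one_closed card_gt_0_iff by blast
  ultimately show ?thesis unfolding excess_def by simp
qed

lemma psi_eq_1_if_degree_1:
  assumes "d = 1" and g: "g \<in> carrier G"
  shows "\<psi> g = 1"
proof -
  have entry: "\<psi> x = \<rho> x $$ (0, 0)" if "x \<in> carrier G" for x
    using trace_rep[OF that] rep_carrier[OF that] assms(1) by (simp add: mat_trace_def)
  have mult: "\<psi> (x \<otimes> y) = \<psi> x * \<psi> y" if "x \<in> carrier G" "y \<in> carrier G" for x y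
    using that rep_carrier[OF that(1)] rep_carrier[OF that(2)] assms(1)
    by (simp add: entry rep_mult index_mult_mat scalar_prod_def)
  have "\<psi> \<one> = 1" using entry[OF one_closed] rep_one assms(1) by simp
  then have pow: "\<psi> (g [^] k) = \<psi> g ^ k" for k :: nat
    using g by (induction k) (simp_all add: mult)
  have "\<psi> g ^ ord g = 1"
    using pow[of "ord g"] g \<open>\<psi> \<one> = 1\<close> by simp
  then have "complex_of_real (Re (\<psi> g) ^ ord g) = 1"
    by (simp only: of_real_power of_real_Re_psi[OF g])
  then have "Re (\<psi> g) ^ ord g = 1 ^ ord g" by (simp only: of_real_eq_1_iff power_one)
  then have "Re (\<psi> g) = 1"
    using power_eq_imp_eq_base[of _ "ord g", OF _ nonneg_psi[OF g] zero_le_one] ord_ge_1[OF finite_carrier g]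
    by simp
  then show ?thesis using of_real_Re_psi[OF g] by simp
qed

end

section \<open>Monotonicity of the excess\<close>

locale prime_power_nonvanishing = nonneg_real_rep +
  assumes nonvanishing: "\<And>g q k. g \<in> carrier G \<Longrightarrow> prime (q::nat) \<Longrightarrow> k \<ge> 1 \<Longrightarrow> ord g = q ^ k \<Longrightarrow> \<psi> g \<noteq> 0"

locale nonvanishing_prime_exponent_section =
  prime_power_nonvanishing G d \<rho> \<psi> + prime_exponent_section G H N p
  for G (structure) and d \<rho> \<psi> H N p
begin

lemma mem_carrier_if_mem_H [simp]: "h \<in> H \<Longrightarrow> h \<in> carrier G"
  using subgroup.subset[OF subgroup_H] by blast

lemma finite_H: "finite H"
  using subgroup.subset[OF subgroup_H] finite_carrier finite_subset by blast

lemma coset_mean_pos: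
  assumes m: "m \<in> H" "m \<notin> N"
  shows "0 < coset_mean N m"
proof (rule ccontr)
  assume "\<not> 0 < coset_mean N m"
  then have "(\<Sum>n\<in>N. Re (\<psi> (m \<otimes> n))) = 0"
    using coset_mean_nonneg[OF subgroup_N, of m] card_N_pos[OF subgroup_N] m(1)
    by (simp add: coset_mean_def)
  then have "\<forall>n\<in>N. Re (\<psi> (m \<otimes> n)) = 0"
    using m(1) mem_carrier_if_mem_N[OF subgroup_N] nonneg_psi
    by (subst (asm) sum_nonneg_eq_0_iff[OF finite_N[OF subgroup_N]]) auto
  obtain n b where n: "n \<in> N" and "b \<ge> 1" "ord (m \<otimes> n) = p ^ b"
    using coset_contains_prime_power_ord[OF finite_carrier subgroup_N _ m(2) pow_p_in_N[OF m(1)] prime_p] m(1)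
    by auto
  moreover have mn: "m \<otimes> n \<in> carrier G" using m(1) mem_carrier_if_mem_N[OF subgroup_N n] by simp
  ultimately have "\<psi> (m \<otimes> n) \<noteq> 0" using nonvanishing[OF mn prime_p] by blast
  moreover have "\<psi> (m \<otimes> n) = 0"
    using of_real_Re_psi[OF mn] \<open>\<forall>n\<in>N. Re (\<psi> (m \<otimes> n)) = 0\<close> n by simp
  ultimately show False by contradiction
qed

lemma coset_mean_pow_mod:
  assumes m: "m \<in> H"
  shows "coset_mean N (m [^] k) = coset_mean N (m [^] (k mod p))"
proof -
  obtain n where "n \<in> N" "m [^] k = m [^] (k mod p) \<otimes> n"
    using pow_in_coset_of_pow_mod[OF subgroup_N _ pow_p_in_N[OF m]] m by auto
  then show ?thesis using coset_mean_mult_right[OF subgroup_N] m by simp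
qed

lemma rep_mult_average_pow_prime_Suc:
  assumes m: "m \<in> H"
  shows "(\<rho> m * average N) ^\<^sub>m (p + 1) = \<rho> m * average N"
proof -
  have mG: "m \<in> carrier G" using m by simp
  have "(\<rho> m * average N) ^\<^sub>m (p + 1) = \<rho> (m [^] Suc p) * average N"
    using pow_rep_mult_average[OF subgroup_N mG] normalizes m by simp
  also have "m [^] Suc p = m \<otimes> m [^] p" using mG by (rule nat_pow_Suc2)
  also have "\<rho> (m \<otimes> m [^] p) * average N = \<rho> m * (\<rho> (m [^] p) * average N)"
    using mG rep_carrier[OF mG] rep_carrier[of "m [^] p"] average_carrier[of N]
    by (simp add: rep_mult assoc_mult_mat[of _ d d _ d _ d])
  also have "\<rho> (m [^] p) * average N = average N"
    using rep_mult_average[OF subgroup_N pow_p_in_N[OF m]] .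
  finally show ?thesis .
qed

lemma prod_coset_mean_powers_in_Ints:
  assumes m: "m \<in> H"
  shows "(\<Prod>j=1..<p. coset_mean N (m [^] j)) \<in> \<int>"
proof -
  have mG: "m \<in> carrier G" using m by simp
  define X where "X = \<rho> m * average N"
  have "X \<in> carrier_mat d d"
    unfolding X_def using rep_carrier[OF mG] average_carrier[of N] by simp
  then have "(\<Prod>j=1..<p. mat_trace (X ^\<^sub>m j)) \<in> \<int>"
    using prod_trace_powers_in_Ints rep_mult_average_pow_prime_Suc[OF m] prime_p unfolding X_def by blast
  moreover have "mat_trace (X ^\<^sub>m j) = complex_of_real (coset_mean N (m [^] j))" if "j \<in> {1..<p}" for j
    using that pow_rep_mult_average[OF subgroup_N mG, of "j - 1"] normalizes m
      trace_rep_mult_average[OF subgroup_N] mG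
    unfolding X_def by simp
  ultimately show ?thesis by (simp del: of_real_prod add: of_real_prod[symmetric])
qed

lemma sum_coset_mean_powers_ge:
  assumes m: "m \<in> H" "m \<notin> N"
  shows "real (p - 1) \<le> (\<Sum>j=1..<p. coset_mean N (m [^] j))"
proof -
  have pos: "0 < coset_mean N (m [^] j)" if "j \<in> {1..<p}" for j
  proof (rule coset_mean_pos)
    show "m [^] j \<in> H" using subgroup_nat_pow_closed[OF subgroup_H m(1)] .
    have "\<not> p dvd j" using that by (auto dest: dvd_imp_le)
    then show "m [^] j \<notin> N"
      using pow_coprime_notin_subgroup[OF subgroup_N _ m(2) pow_p_in_N prime_p] m(1) by simp
  qed
  then have "0 < (\<Prod>j=1..<p. coset_mean N (m [^] j))" by (rule prod_pos)
  moreover from this have "1 \<le> \<bar>\<Prod>j=1..<p. coset_mean N (m [^] j)\<bar>"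
    by (intro Ints_nonzero_abs_ge1[OF prod_coset_mean_powers_in_Ints[OF m(1)]]) linarith
  ultimately have "1 \<le> (\<Prod>j=1..<p. coset_mean N (m [^] j))" by simp
  from card_le_sum_if_one_le_prod[OF _ pos this] show ?thesis by simp
qed

lemma sum_coset_mean_pow_eq:
  assumes j: "\<not> p dvd j"
  shows "(\<Sum>m\<in>H - N. coset_mean N (m [^] j)) = (\<Sum>m\<in>H - N. coset_mean N m)"
proof -
  have "card (carrier G) > 0" using finite_carrier one_closed card_gt_0_iff by blast
  then obtain k where k: "[k = j] (mod p)" and coprime: "coprime k (card (carrier G))"
    using exists_coprime_cong[OF prime_p _ j] by blast
  \<comment> \<open>\<open>m \<mapsto> m [^] j\<close> need not be injective; an exponent \<open>k \<equiv> j (mod p)\<close> coprime to the group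
    order gives the same coset means and a bijection of \<open>H - N\<close>.\<close>
  have "coset_mean N (m [^] j) = coset_mean N (m [^] k)" if m: "m \<in> H" for m
  proof -
    have "coset_mean N (m [^] j) = coset_mean N (m [^] (j mod p))" by (rule coset_mean_pow_mod[OF m])
    also have "j mod p = k mod p" using k by (simp add: cong_def)
    also have "coset_mean N (m [^] (k mod p)) = coset_mean N (m [^] k)" by (rule coset_mean_pow_mod[OF m, symmetric])
    finally show ?thesis .
  qed
  then have "(\<Sum>m\<in>H - N. coset_mean N (m [^] j)) = (\<Sum>m\<in>H - N. coset_mean N (m [^] k))"
    by (intro sum.cong) auto
  also have "\<dots> = (\<Sum>m\<in>H - N. coset_mean N m)"
  proof (rule sum_bij_endo)
    show "finite (H - N)" using finite_H by simp
    show "inj_on (\<lambda>m. m [^] k) (H - N)"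
      using subgroup.subset[OF subgroup_H]
      by (blast intro: inj_on_subset[OF inj_on_pow_coprime_card[OF finite_carrier coprime]])
    have k_coprime: "\<not> p dvd k" using cong_dvd_iff[OF k] j by simp
    show "(\<lambda>m. m [^] k) ` (H - N) \<subseteq> H - N"
    proof (rule image_subsetI)
      fix m assume m: "m \<in> H - N"
      then have "m [^] k \<notin> N"
        using pow_coprime_notin_subgroup[OF subgroup_N _ _ pow_p_in_N prime_p k_coprime] by simp
      with m show "m [^] k \<in> H - N" using subgroup_nat_pow_closed[OF subgroup_H] by blast
    qed
  qed
  finally show ?thesis .
qed

lemma card_le_sum_coset_mean: "real (card (H - N)) \<le> (\<Sum>m\<in>H - N. coset_mean N m)"
proof -
  have "real (p - 1) * real (card (H - N)) = (\<Sum>m\<in>H - N. real (p - 1))" by simp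
  also have "\<dots> \<le> (\<Sum>m\<in>H - N. \<Sum>j=1..<p. coset_mean N (m [^] j))"
    using sum_coset_mean_powers_ge by (intro sum_mono) auto
  also have "\<dots> = (\<Sum>j=1..<p. \<Sum>m\<in>H - N. coset_mean N (m [^] j))" by (rule sum.swap)
  also have "\<dots> = (\<Sum>j=1..<p. \<Sum>m\<in>H - N. coset_mean N m)"
    by (intro sum.cong refl sum_coset_mean_pow_eq) (auto dest: dvd_imp_le)
  also have "\<dots> = real (p - 1) * (\<Sum>m\<in>H - N. coset_mean N m)" by simp
  finally show ?thesis using prime_gt_1_nat[OF prime_p] by simp
qed

lemma excess_mono: "excess N \<le> excess H"
proof -
  have "(\<Sum>x\<in>H. coset_mean N x) = (\<Sum>x\<in>H - N. coset_mean N x) + (\<Sum>x\<in>N. coset_mean N x)"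
    by (rule sum.subset_diff[OF N_subset_H finite_H])
  moreover have "real (card H) = real (card (H - N)) + real (card N)"
    using card_Diff_subset[OF finite_N[OF subgroup_N] N_subset_H] card_mono[OF finite_H N_subset_H]
    by simp
  ultimately show ?thesis
    using sum_coset_mean[OF subgroup_N subgroup_H N_subset_H] sum_coset_mean[OF subgroup_N subgroup_N order_refl]
      card_le_sum_coset_mean
    unfolding excess_def by linarith
qed

end

lemma (in prime_power_nonvanishing) excess_trivial_le_excess_carrier:
  assumes "solvable G"
  shows "excess {\<one>} \<le> excess (carrier G)"
proof (rule solvable_le_if_monotone_on_prime_exponent_sections[OF finite_carrier assms])
  fix H N p assume "prime_exponent_section G H N p"
  then interpret nonvanishing_prime_exponent_section G d \<rho> \<psi> H N p
    by (intro nonvanishing_prime_exponent_section.intro prime_power_nonvanishing_axioms)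
  show "excess N \<le> excess H" by (rule excess_mono)
qed

theorem proposition3p2:
  fixes G :: "('a, 'b) monoid_scheme" and \<psi> :: "'a \<Rightarrow> complex"
  assumes "group G" and "finite (carrier G)" and "solvable G"
    and "ordinary_S_character G \<psi>"
    and "\<exists>g\<in>carrier G. \<psi> g \<noteq> 1"
  shows "\<exists>g\<in>carrier G. \<exists>p k. prime (p::nat) \<and> k \<ge> 1 \<and> group.ord G g = p ^ k \<and> \<psi> g = 0"
proof (rule ccontr)
  assume no_zero: "\<not> ?thesis"
  obtain d \<rho> where rep: "is_rep G d \<rho>" and trace: "\<forall>g\<in>carrier G. \<psi> g = mat_trace (\<rho> g)"
    and inner: "char_inner G \<psi> (\<lambda>_. 1) = 1" and psi_values: "\<forall>g\<in>carrier G. \<psi> g \<in> \<real> \<and> 0 \<le> Re (\<psi> g)"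
    using assms(4) unfolding ordinary_S_character_def is_character_def by blast
  interpret prime_power_nonvanishing G d \<rho> \<psi>
    using assms(1,2) rep trace psi_values no_zero
    by (intro prime_power_nonvanishing.intro nonneg_real_rep.intro
        prime_power_nonvanishing_axioms.intro nonneg_real_rep_axioms.intro) auto
  have "real d - 1 \<le> 0"
    using excess_trivial_le_excess_carrier[OF assms(3)] excess_trivial excess_carrier[OF inner] by simp
  moreover have "d \<noteq> 0" using excess_carrier_neg_if_degree_0 excess_carrier[OF inner] by force
  ultimately have "d = 1" by simp
  then show False using psi_eq_1_if_degree_1 assms(5) by blast
qed

end
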